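(* Let $\mathcal F$ be a family of graphs in which every member has the same number $e$ of edges, and let $n$ be a positive integer. Then $x(n,\mathcal F)+e=x'(n,\mathcal F)$.
   Context: Search game: given a vertex set $V$ with $|V|=n$, an unknown edge set $E_0$ of pairs from $V$ is hidden such that the graph $(V,E_0)$ is isomorphic to some $F\in\mathcal F$ together with $n-|V(F)|$ isolated vertices. A query is a pair of vertices, answered YES if it lies in $E_0$ and NO otherwise; queries are chosen adaptively by the Questioner and answered consistently by an Adversary. $E_0$ is identified when exactly one admissible edge set is consistent with all answers. $x(n,\mathcal F)$ is the number of NO answers needed in the worst case by the best strategy to identify $E_0$ (only NO answers are counted). $x'(n,\mathcal F)$ is the total number of queries needed in the worst case by the best strategy in the variant where the game ends only when $E_0$ is identified and moreover every pair of $E_0$ has been queried. *)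

theory Defs
  imports Main
begin

definition simple_graph :: "('a set \<times> 'a set set) \<Rightarrow> bool" where
  "simple_graph G \<longleftrightarrow> finite (fst G) \<and> (\<forall>ed\<in>snd G. ed \<subseteq> fst G \<and> card ed = 2)"

definition vpairs :: "nat \<Rightarrow> nat set set" where
  "vpairs n = {p. p \<subseteq> {0..<n} \<and> card p = 2}"

text \<open>Admissible edge sets: E such that (V,E) is isomorphic to some member of the
family together with isolated vertices, i.e. E is the image of the edge set of some
F in the family under an injection of V(F) into V.\<close>
definition admissible :: "nat \<Rightarrow> ('a set \<times> 'a set set) set \<Rightarrow> nat set set set" where
  "admissible n FF = {E. \<exists>G\<in>FF. \<exists>f. inj_on f (fst G) \<and> f ` fst G \<subseteq> {0..<n}
                         \<and> E = (\<lambda>ed. f ` ed) ` snd G}"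

text \<open>Game counting NO answers. win_no P k C: from the state in which C is the set of
admissible edge sets consistent with the answers so far, the Questioner (querying
pairs from P) can force identification with at most k further NO answers.
The Adversary may give any answer consistent with some member of C.\<close>
inductive win_no :: "nat set set \<Rightarrow> nat \<Rightarrow> nat set set set \<Rightarrow> bool" for P where
  finish: "card C = 1 \<Longrightarrow> win_no P k C"
| query: "\<lbrakk> p \<in> P;
            (\<exists>E\<in>C. p \<in> E) \<longrightarrow> win_no P k {E\<in>C. p \<in> E};
            (\<exists>E\<in>C. p \<notin> E) \<longrightarrow> (0 < k \<and> win_no P (k - 1) {E\<in>C. p \<notin> E}) \<rbrakk>
          \<Longrightarrow> win_no P k C"

text \<open>Game counting all queries, ending only when E0 is identified and all its pairs
have been queried. Q is the set of pairs queried so far.\<close>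
inductive win_all :: "nat set set \<Rightarrow> nat \<Rightarrow> nat set set set \<Rightarrow> nat set set \<Rightarrow> bool" for P where
  finish: "card C = 1 \<Longrightarrow> \<Union>C \<subseteq> Q \<Longrightarrow> win_all P k C Q"
| query: "\<lbrakk> p \<in> P; 0 < k;
            (\<exists>E\<in>C. p \<in> E) \<longrightarrow> win_all P (k - 1) {E\<in>C. p \<in> E} (insert p Q);
            (\<exists>E\<in>C. p \<notin> E) \<longrightarrow> win_all P (k - 1) {E\<in>C. p \<notin> E} (insert p Q) \<rbrakk>
          \<Longrightarrow> win_all P k C Q"

definition x_game :: "nat \<Rightarrow> ('a set \<times> 'a set set) set \<Rightarrow> nat" where
  "x_game n FF = (LEAST k. win_no (vpairs n) k (admissible n FF))"

definition x'_game :: "nat \<Rightarrow> ('a set \<times> 'a set set) set \<Rightarrow> nat" where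
  "x'_game n FF = (LEAST k. win_all (vpairs n) k (admissible n FF) {})"

end

theory Submission
  imports Defs
begin

(* Both games run on the same sets of candidate edge sets and differ only in what they count.
   In the full game every pair of the hidden edge set must be queried, so each play contains
   at least e YES answers: a full-game strategy with k queries meets at most k - e NO answers.
   Conversely, a strategy meeting at most k NO answers becomes a full-game strategy by skipping
   queries whose answer is already known and, once the edge set is identified, querying its
   remaining pairs; every YES answer then hits a new pair of the hidden edge set, so at most
   e of them occur and k + e queries suffice. *)

lemma win_no_mono:
  assumes "win_no P k C" and "k \<le> k'"
  shows "win_no P k' C"
  using assms
proof (induction arbitrary: k' rule: win_no.induct)
  case (finish C k)
  then show ?case by (intro win_no.finish)
next
  case (query p C k)
  show ?case
  proof (rule win_no.query[OF query.hyps(1)])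
    show "(\<exists>E\<in>C. p \<in> E) \<longrightarrow> win_no P k' {E \<in> C. p \<in> E}"
      using query by blast
    show "(\<exists>E\<in>C. p \<notin> E) \<longrightarrow> 0 < k' \<and> win_no P (k' - 1) {E \<in> C. p \<notin> E}"
      using query by (meson diff_le_mono less_le_trans)
  qed
qed

lemma win_all_mono:
  assumes "win_all P k C Q" and "P \<subseteq> P'" and "k \<le> k'"
  shows "win_all P' k' C Q"
  using assms
proof (induction arbitrary: k' rule: win_all.induct)
  case (finish C Q k)
  then show ?case by (intro win_all.finish)
next
  case (query p k C Q)
  show ?case
  proof (rule win_all.query)
    show "p \<in> P'" "0 < k'" using query by auto
    show "(\<exists>E\<in>C. p \<in> E) \<longrightarrow> win_all P' (k' - 1) {E \<in> C. p \<in> E} (insert p Q)"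
      using query by (meson diff_le_mono)
    show "(\<exists>E\<in>C. p \<notin> E) \<longrightarrow> win_all P' (k' - 1) {E \<in> C. p \<notin> E} (insert p Q)"
      using query by (meson diff_le_mono)
  qed
qed

lemma win_all_exhaustive:
  assumes "finite P" and "C \<noteq> {}" and "\<And>E. E \<in> C \<Longrightarrow> E \<subseteq> P \<and> E \<inter> Q = Y"
  shows "win_all P (card (P - Q)) C Q"
  using assms(2,3)
proof (induction "card (P - Q)" arbitrary: Q Y C)
  case 0
  then have "P \<subseteq> Q" using \<open>finite P\<close> by auto
  then have "E = Y" if "E \<in> C" for E using "0.prems"(2)[OF that] by blast
  then have "C = {Y}" using \<open>C \<noteq> {}\<close> by blast
  then show ?case using "0.prems"(2) by (intro win_all.finish) auto
next
  case (Suc m)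
  then have "P - Q \<noteq> {}" by (metis card.empty nat.simps(3))
  then obtain p where p: "p \<in> P" "p \<notin> Q" by blast
  have "P - insert p Q = (P - Q) - {p}" by blast
  then have card_rest: "m = card (P - insert p Q)"
    using Suc.hyps(2) p \<open>finite P\<close> by (simp add: card_Diff_singleton)
  have IH: "win_all P (card (P - Q) - 1) C' (insert p Q)"
    if "C' \<noteq> {}" and "\<And>E. E \<in> C' \<Longrightarrow> E \<subseteq> P \<and> E \<inter> insert p Q = Y'" for C' Y'
    using Suc.hyps(1)[OF card_rest that] Suc.hyps(2) card_rest by (metis diff_Suc_1)
  show ?case
  proof (rule win_all.query[OF p(1)]; (intro impI)?)
    show "0 < card (P - Q)" using Suc.hyps(2) by simp
    show "win_all P (card (P - Q) - 1) {E \<in> C. p \<in> E} (insert p Q)" if "\<exists>E\<in>C. p \<in> E"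
      using that Suc.prems(2) by (intro IH[where Y' = "insert p Y"]) auto
    show "win_all P (card (P - Q) - 1) {E \<in> C. p \<notin> E} (insert p Q)" if "\<exists>E\<in>C. p \<notin> E"
      using that Suc.prems(2) by (intro IH[where Y' = Y]) auto
  qed
qed

lemma win_all_card_unqueried:
  assumes "win_all P k C Q" and "E \<in> C" and "finite E"
  shows "card (E - Q) \<le> k"
  using assms
proof (induction rule: win_all.induct)
  case (finish C Q k)
  then have "E - Q = {}" by blast
  then show ?case by (metis card.empty zero_le)
next
  case (query p k C Q)
  have IH: "card (E - insert p Q) \<le> k - 1"
  proof (cases "p \<in> E")
    case True
    then show ?thesis using query.IH(1) query.prems by blast
  next
    case False
    then show ?thesis using query.IH(2) query.prems by blast
  qed
  have "E - Q \<subseteq> insert p (E - insert p Q)" by blast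
  then have "card (E - Q) \<le> card (insert p (E - insert p Q))"
    using \<open>finite E\<close> by (intro card_mono) auto
  also have "\<dots> \<le> k" using card_insert_le_m1[OF \<open>0 < k\<close> IH] .
  finally show ?case .
qed

(* C is the family of candidate edge sets after the pairs in Q have been queried,
   Y being those answered YES. *)
definition consistent_family :: "'a set \<Rightarrow> nat \<Rightarrow> 'a set \<Rightarrow> 'a set \<Rightarrow> 'a set set \<Rightarrow> bool" where
  "consistent_family P e Q Y C \<longleftrightarrow> (\<forall>E\<in>C. E \<subseteq> P \<and> finite E \<and> card E = e \<and> E \<inter> Q = Y)"

lemma consistent_familyD:
  assumes "consistent_family P e Q Y C" and "E \<in> C"
  shows "E \<subseteq> P" "finite E" "card E = e" "E \<inter> Q = Y"
  using assms unfolding consistent_family_def by auto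

lemma consistent_family_yes:
  "consistent_family P e Q Y C \<Longrightarrow> consistent_family P e (insert p Q) (insert p Y) {E \<in> C. p \<in> E}"
  unfolding consistent_family_def by auto

lemma consistent_family_no:
  "consistent_family P e Q Y C \<Longrightarrow> consistent_family P e (insert p Q) Y {E \<in> C. p \<notin> E}"
  unfolding consistent_family_def by auto

lemma consistent_family_known_answer:
  assumes "consistent_family P e Q Y C" and "p \<in> Q"
  shows "p \<in> Y \<Longrightarrow> {E \<in> C. p \<in> E} = C" and "p \<notin> Y \<Longrightarrow> {E \<in> C. p \<notin> E} = C"
  using assms unfolding consistent_family_def by auto

lemma consistent_family_card_le:
  assumes "consistent_family P e Q Y C" and "E \<in> C"
  shows "card Y \<le> e"
proof -
  have "Y \<subseteq> E" "finite E" "card E = e" using consistent_familyD[OF assms] by auto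
  then show ?thesis by (metis card_mono)
qed

lemma consistent_family_card_fresh:
  assumes "consistent_family P e Q Y C" and "E \<in> C" and "p \<in> E" and "p \<notin> Q"
  shows "card (insert p Y) = Suc (card Y)" and "card Y < e"
proof -
  note E = consistent_familyD[OF assms(1,2)]
  have "insert p Y \<subseteq> E" "p \<notin> Y" using E(4) assms(3,4) by auto
  moreover have "finite Y" using E(2,4) by blast
  ultimately show card_insert: "card (insert p Y) = Suc (card Y)" by simp
  show "card Y < e" using card_mono[OF E(2) \<open>insert p Y \<subseteq> E\<close>] card_insert E(3) by simp
qed

lemma win_all_identified:
  assumes "consistent_family P e Q Y {E}"
  shows "win_all P (e - card Y) {E} Q"
proof -
  note E = consistent_familyD[OF assms singletonI]
  have "win_all E (card (E - Q)) {E} Q"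
    by (rule win_all_exhaustive[where Y = Y]) (use E in auto)
  moreover have "card (E - Q) = e - card Y" using card_Diff_subset_Int[of E Q] E by force
  ultimately have "win_all E (e - card Y) {E} Q" by simp
  then show ?thesis using E(1) by (rule win_all_mono) simp
qed

lemma win_all_imp_win_no:
  assumes "win_all P k C Q" and "consistent_family P e Q Y C"
  shows "win_no P (k + card Y - e) C"
  using assms
proof (induction arbitrary: Y rule: win_all.induct)
  case (finish C Q k)
  then show ?case by (intro win_no.finish)
next
  case (query p k C Q)
  show ?case
  proof (rule win_no.query[OF query.hyps(1)]; intro impI)
    assume "\<exists>E\<in>C. p \<in> E"
    then obtain E where E: "E \<in> C" "p \<in> E" by blast
    have "finite Y" using consistent_familyD[OF query.prems E(1)] by blast
    then have "card (insert p Y) \<le> Suc (card Y)" by (simp add: card_insert_if)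
    then have "k - 1 + card (insert p Y) - e \<le> k + card Y - e" using \<open>0 < k\<close> by linarith
    moreover have "win_no P (k - 1 + card (insert p Y) - e) {E \<in> C. p \<in> E}"
      using query.IH(1) E consistent_family_yes[OF query.prems] by blast
    ultimately show "win_no P (k + card Y - e) {E \<in> C. p \<in> E}" by (rule win_no_mono[rotated])
  next
    assume "\<exists>E\<in>C. p \<notin> E"
    then obtain E where E: "E \<in> C" "p \<notin> E" by blast
    note E_props = consistent_familyD[OF query.prems E(1)]
    have branch: "win_all P (k - 1) {E \<in> C. p \<notin> E} (insert p Q)"
      and IH: "win_no P (k - 1 + card Y - e) {E \<in> C. p \<notin> E}"
      using query.IH(2) E consistent_family_no[OF query.prems] by blast+
    have "E \<in> {E \<in> C. p \<notin> E}" using E by simp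
    then have "card (E - insert p Q) \<le> k - 1"
      using E_props(2) by (rule win_all_card_unqueried[OF branch])
    moreover have "E - insert p Q = E - Q" using E(2) by blast
    ultimately have "card (E - Q) \<le> k - 1" by simp
    moreover have "card (E - Q) = e - card Y"
      using card_Diff_subset_Int[of E Q] E_props by force
    ultimately have "0 < k + card Y - e" and shift: "k + card Y - e - 1 = k - 1 + card Y - e"
      using \<open>0 < k\<close> by linarith+
    moreover have "win_no P (k + card Y - e - 1) {E \<in> C. p \<notin> E}"
      unfolding shift by (rule IH)
    ultimately show "0 < k + card Y - e \<and> win_no P (k + card Y - e - 1) {E \<in> C. p \<notin> E}"
      by blast
  qed
qed

lemma win_all_query_fresh:
  assumes cons: "consistent_family P e Q Y C" and "E0 \<in> C" and "p \<in> P" and fresh: "p \<notin> Q"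
    and yes: "\<exists>E\<in>C. p \<in> E \<Longrightarrow> win_all P (k + e - card (insert p Y)) {E \<in> C. p \<in> E} (insert p Q)"
    and no: "\<exists>E\<in>C. p \<notin> E \<Longrightarrow> 0 < k \<and> win_all P (k - 1 + e - card Y) {E \<in> C. p \<notin> E} (insert p Q)"
  shows "win_all P (k + e - card Y) C Q"
proof (rule win_all.query[OF \<open>p \<in> P\<close>]; (intro impI)?)
  have card_Y: "card Y \<le> e" by (rule consistent_family_card_le[OF cons \<open>E0 \<in> C\<close>])
  show "0 < k + e - card Y"
  proof (cases "p \<in> E0")
    case True
    then show ?thesis using consistent_family_card_fresh(2)[OF cons \<open>E0 \<in> C\<close> _ fresh] by linarith
  next
    case False
    then have "0 < k" using no \<open>E0 \<in> C\<close> by blast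
    then show ?thesis using card_Y by linarith
  qed
  show "win_all P (k + e - card Y - 1) {E \<in> C. p \<in> E} (insert p Q)" if "\<exists>E\<in>C. p \<in> E"
    using that yes consistent_family_card_fresh[OF cons _ _ fresh] by (auto simp: diff_diff_add)
  show "win_all P (k + e - card Y - 1) {E \<in> C. p \<notin> E} (insert p Q)" if "\<exists>E\<in>C. p \<notin> E"
  proof -
    have shift: "k + e - card Y - 1 = k - 1 + e - card Y" using no[OF that] card_Y by linarith
    show ?thesis unfolding shift using no[OF that] by blast
  qed
qed

lemma win_no_imp_win_all:
  assumes "win_no P k C" and "C \<noteq> {}" and "consistent_family P e Q Y C"
  shows "win_all P (k + e - card Y) C Q"
  using assms
proof (induction arbitrary: Q Y rule: win_no.induct)
  case (finish C k)
  then obtain E where C: "C = {E}" by (meson card_1_singletonE)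
  show ?case unfolding C
    using win_all_identified[OF finish.prems(2)[unfolded C]] by (rule win_all_mono) simp_all
next
  case (query p C k)
  have IH_yes: "win_all P (k + e - card Y') {E \<in> C. p \<in> E} Q'"
    if "E \<in> C" "p \<in> E" "consistent_family P e Q' Y' {E \<in> C. p \<in> E}" for E Q' Y'
    using query.IH(1) that by blast
  have k_pos: "0 < k" and IH_no: "win_all P (k - 1 + e - card Y') {E \<in> C. p \<notin> E} Q'"
    if "E \<in> C" "p \<notin> E" "consistent_family P e Q' Y' {E \<in> C. p \<notin> E}" for E Q' Y'
    using query.IH(2) that by blast+
  note cons = query.prems(2)
  obtain E0 where "E0 \<in> C" using \<open>C \<noteq> {}\<close> by blast
  consider (answered_yes) "p \<in> Q" "p \<in> Y" | (answered_no) "p \<in> Q" "p \<notin> Y" | (fresh) "p \<notin> Q"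
    by blast
  then show ?case
  proof cases
    case answered_yes
    then have C: "{E \<in> C. p \<in> E} = C" by (rule consistent_family_known_answer[OF cons])
    then have "p \<in> E0" using \<open>E0 \<in> C\<close> by blast
    then show ?thesis using IH_yes[OF \<open>E0 \<in> C\<close>] cons unfolding C by simp
  next
    case answered_no
    then have C: "{E \<in> C. p \<notin> E} = C" by (rule consistent_family_known_answer[OF cons])
    then have "p \<notin> E0" using \<open>E0 \<in> C\<close> by blast
    then have "win_all P (k - 1 + e - card Y) C Q" using IH_no[OF \<open>E0 \<in> C\<close>] cons unfolding C by simp
    then show ?thesis by (rule win_all_mono) simp_all
  next
    case fresh
    show ?thesis
      by (rule win_all_query_fresh[OF cons \<open>E0 \<in> C\<close> query.hyps(1) fresh])
        (use IH_yes consistent_family_yes[OF cons] k_pos IH_no consistent_family_no[OF cons] in blast)+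
  qed
qed

lemma finite_vpairs: "finite (vpairs n)"
proof (rule finite_subset)
  show "vpairs n \<subseteq> Pow {0..<n}" unfolding vpairs_def by auto
qed simp

lemma admissible_edge_set:
  assumes "\<forall>G\<in>FF. simple_graph G" and "E \<in> admissible n FF"
  obtains G where "G \<in> FF" "E \<subseteq> vpairs n" "card E = card (snd G)"
proof -
  obtain G f where G: "G \<in> FF" "inj_on f (fst G)" "f ` fst G \<subseteq> {0..<n}"
    and E: "E = (\<lambda>ed. f ` ed) ` snd G"
    using assms(2) unfolding admissible_def by blast
  have edges: "ed \<subseteq> fst G" "card ed = 2" if "ed \<in> snd G" for ed
    using assms(1) G(1) that unfolding simple_graph_def by auto
  have "f ` ed \<in> vpairs n" if "ed \<in> snd G" for ed
    using edges[OF that] G(2,3) card_image inj_on_subset unfolding vpairs_def by fastforce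
  then have "E \<subseteq> vpairs n" using E by blast
  moreover have "inj_on (image f) (snd G)"
    using inj_on_subset[OF inj_on_image_Pow[OF G(2)]] edges by auto
  then have "card E = card (snd G)" using E by (simp add: card_image)
  ultimately show ?thesis using G(1) that by blast
qed

lemma consistent_family_admissible:
  assumes "\<forall>G\<in>FF. simple_graph G" and "\<forall>G\<in>FF. card (snd G) = e"
  shows "consistent_family (vpairs n) e {} {} (admissible n FF)"
  unfolding consistent_family_def
proof
  fix E assume "E \<in> admissible n FF"
  then obtain G where "G \<in> FF" "E \<subseteq> vpairs n" "card E = card (snd G)"
    by (rule admissible_edge_set[OF assms(1)])
  then show "E \<subseteq> vpairs n \<and> finite E \<and> card E = e \<and> E \<inter> {} = {}"
    using assms(2) finite_subset[OF _ finite_vpairs] by auto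
qed

theorem proposition4p2:
  fixes FF :: "('a set \<times> 'a set set) set" and e n :: nat
  assumes "\<forall>G\<in>FF. simple_graph G"
    and "\<forall>G\<in>FF. card (snd G) = e"
    and "0 < n"
    and "admissible n FF \<noteq> {}"
  shows "x_game n FF + e = x'_game n FF"
proof -
  let ?A = "admissible n FF" and ?P = "vpairs n"
  have cons: "consistent_family ?P e {} {} ?A"
    using consistent_family_admissible[OF assms(1,2)] .
  have "win_all ?P (card (?P - {})) ?A {}"
    using win_all_exhaustive[OF finite_vpairs assms(4)] cons unfolding consistent_family_def by blast
  then have win_all_x': "win_all ?P (x'_game n FF) ?A {}"
    unfolding x'_game_def by (rule LeastI)
  obtain E where "E \<in> ?A" using assms(4) by blast
  then have e_le: "e \<le> x'_game n FF"
    using win_all_card_unqueried[OF win_all_x'] consistent_familyD(2,3)[OF cons] by fastforce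
  have "win_no ?P (x'_game n FF - e) ?A"
    using win_all_imp_win_no[OF win_all_x' cons] by simp
  then have "x_game n FF \<le> x'_game n FF - e" and win_no_x: "win_no ?P (x_game n FF) ?A"
    unfolding x_game_def by (rule Least_le, rule LeastI)
  have "win_all ?P (x_game n FF + e) ?A {}"
    using win_no_imp_win_all[OF win_no_x assms(4) cons] by simp
  then have "x'_game n FF \<le> x_game n FF + e"
    unfolding x'_game_def by (rule Least_le)
  with \<open>x_game n FF \<le> x'_game n FF - e\<close> e_le show ?thesis by linarith
qed

end
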